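(* Let $G=(V,E)$ be a directed graph, $s\neq t$ vertices and $k\ge 2$ an integer. For any simple path $p^*(s,t)$ from $s$ to $t$ of length $l\le k$, its first two edges and its last two edges are definite edges.
   Context: A path from $x$ to $y$ in $G$ is a vertex sequence $x=v_0,\dots,v_m=y$ with $(v_{i-1},v_i)\in E$; its length is $m$ and $V(p)$ is its vertex set. A simple path has no repeated vertex. For a vertex $u$ and integer $l\ge 0$, $EV^*_l(s,u)$ exists iff there is at least one simple path from $s$ to $u$ of length at most $l$ not containing $t$, and then $EV^*_l(s,u)$ is the intersection of $V(p)$ over all such paths. Symmetrically, $EV^*_l(v,t)$ exists iff there is at least one simple path from $v$ to $t$ of length at most $l$ not containing $s$, and then it is the intersection of $V(p)$ over all such paths. An edge $e(u,v)\in E$ is a definite edge (for $s,t,k$) if at least one of the following holds: (a) $u=s$ and $EV^*_{k-1}(v,t)$ exists; (b) $v=t$ and $EV^*_{k-1}(s,u)$ exists; (c) $EV^*_1(s,u)$ and $EV^*_{k-2}(v,t)$ exist and $u\notin EV^*_{k-2}(v,t)$; (d) $EV^*_1(v,t)$ and $EV^*_{k-2}(s,u)$ exist and $v\notin EV^*_{k-2}(s,u)$. *)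

theory Defs
  imports Main
begin

definition is_path :: "('a \<times> 'a) set \<Rightarrow> 'a list \<Rightarrow> 'a \<Rightarrow> 'a \<Rightarrow> bool" where
  "is_path E p x y \<longleftrightarrow> p \<noteq> [] \<and> hd p = x \<and> last p = y \<and>
     (\<forall>i. Suc i < length p \<longrightarrow> (p ! i, p ! Suc i) \<in> E)"

definition path_len :: "'a list \<Rightarrow> nat" where
  "path_len p = length p - 1"

definition simple_path :: "('a \<times> 'a) set \<Rightarrow> 'a list \<Rightarrow> 'a \<Rightarrow> 'a \<Rightarrow> bool" where
  "simple_path E p x y \<longleftrightarrow> is_path E p x y \<and> distinct p"

definition EVs_paths :: "('a \<times> 'a) set \<Rightarrow> 'a \<Rightarrow> 'a \<Rightarrow> nat \<Rightarrow> 'a \<Rightarrow> 'a list set" where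
  "EVs_paths E s t l u = {p. simple_path E p s u \<and> path_len p \<le> l \<and> t \<notin> set p}"

definition EVs_exists :: "('a \<times> 'a) set \<Rightarrow> 'a \<Rightarrow> 'a \<Rightarrow> nat \<Rightarrow> 'a \<Rightarrow> bool" where
  "EVs_exists E s t l u \<longleftrightarrow> EVs_paths E s t l u \<noteq> {}"

definition EVs :: "('a \<times> 'a) set \<Rightarrow> 'a \<Rightarrow> 'a \<Rightarrow> nat \<Rightarrow> 'a \<Rightarrow> 'a set" where
  "EVs E s t l u = (\<Inter>p \<in> EVs_paths E s t l u. set p)"

definition EVt_paths :: "('a \<times> 'a) set \<Rightarrow> 'a \<Rightarrow> 'a \<Rightarrow> nat \<Rightarrow> 'a \<Rightarrow> 'a list set" where
  "EVt_paths E s t l v = {p. simple_path E p v t \<and> path_len p \<le> l \<and> s \<notin> set p}"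

definition EVt_exists :: "('a \<times> 'a) set \<Rightarrow> 'a \<Rightarrow> 'a \<Rightarrow> nat \<Rightarrow> 'a \<Rightarrow> bool" where
  "EVt_exists E s t l v \<longleftrightarrow> EVt_paths E s t l v \<noteq> {}"

definition EVt :: "('a \<times> 'a) set \<Rightarrow> 'a \<Rightarrow> 'a \<Rightarrow> nat \<Rightarrow> 'a \<Rightarrow> 'a set" where
  "EVt E s t l v = (\<Inter>p \<in> EVt_paths E s t l v. set p)"

definition definite_edge :: "('a \<times> 'a) set \<Rightarrow> 'a \<Rightarrow> 'a \<Rightarrow> nat \<Rightarrow> 'a \<Rightarrow> 'a \<Rightarrow> bool" where
  "definite_edge E s t k u v \<longleftrightarrow> (u, v) \<in> E \<and>
     ((u = s \<and> EVt_exists E s t (k - 1) v) \<or>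
      (v = t \<and> EVs_exists E s t (k - 1) u) \<or>
      (EVs_exists E s t 1 u \<and> EVt_exists E s t (k - 2) v \<and> u \<notin> EVt E s t (k - 2) v) \<or>
      (EVt_exists E s t 1 v \<and> EVs_exists E s t (k - 2) u \<and> v \<notin> EVs E s t (k - 2) u))"

end

theory Submission
  imports Defs
begin

text \<open>The subpaths of the simple s-t path p are the witnesses: a prefix ending before t
  avoids t, a suffix starting after s avoids s, and their lengths fit because
  path_len p \<le> k. For the second edge (p1, p2), the prefix [s, p1] witnesses EV*_1(s, p1),
  while the suffix from p2 is a path counted in EV*_{k-2}(p2, t) that misses p1, so p1 is
  not in that intersection; the penultimate edge is symmetric.\<close>

lemma simple_path_drop:
  assumes "simple_path E p x y" "j < length p"
  shows "simple_path E (drop j p) (p ! j) y"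
  using assms unfolding simple_path_def is_path_def
  by (auto simp: hd_drop_conv_nth last_drop)

lemma simple_path_take:
  assumes "simple_path E p x y" "j < length p"
  shows "simple_path E (take (Suc j) p) x (p ! j)"
proof -
  have "last (take (Suc j) p) = p ! j"
    using assms(2) by (simp add: take_Suc_conv_app_nth)
  then show ?thesis
    using assms unfolding simple_path_def is_path_def by (auto simp: hd_take)
qed

lemma distinct_nth_notin_set_drop:
  assumes "distinct xs" "i < j"
  shows "xs ! i \<notin> set (drop j xs)"
proof
  assume "xs ! i \<in> set (drop j xs)"
  then obtain m where "m < length xs - j" "xs ! (j + m) = xs ! i"
    by (auto simp: in_set_conv_nth)
  with assms show False by (auto simp: nth_eq_iff_index_eq)
qed

lemma distinct_nth_notin_set_take:
  assumes "distinct xs" "j \<le> i" "i < length xs"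
  shows "xs ! i \<notin> set (take j xs)"
proof
  assume "xs ! i \<in> set (take j xs)"
  then obtain m where "m < j" "xs ! m = xs ! i"
    by (auto simp: in_set_conv_nth)
  with assms show False by (auto simp: nth_eq_iff_index_eq)
qed

lemma simple_path_edge:
  assumes "simple_path E p x y" "Suc i < length p"
  shows "(p ! i, p ! Suc i) \<in> E"
  using assms unfolding simple_path_def is_path_def by blast

lemma simple_path_ends:
  assumes "simple_path E p x y"
  shows "p ! 0 = x" "p ! path_len p = y"
  using assms unfolding simple_path_def is_path_def path_len_def
  by (auto simp: hd_conv_nth last_conv_nth)

lemma suffix_in_EVt_paths:
  assumes "simple_path E p s t" "0 < j" "j < length p" "path_len p - j \<le> l"
  shows "drop j p \<in> EVt_paths E s t l (p ! j)"
proof -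
  have "p ! 0 \<notin> set (drop j p)"
    using assms(1,2) distinct_nth_notin_set_drop unfolding simple_path_def by blast
  then have "s \<notin> set (drop j p)"
    using simple_path_ends(1)[OF assms(1)] by simp
  then show ?thesis
    using simple_path_drop[OF assms(1,3)] assms(4)
    unfolding EVt_paths_def path_len_def by auto
qed

lemma prefix_in_EVs_paths:
  assumes "simple_path E p s t" "j < path_len p" "j \<le> l"
  shows "take (Suc j) p \<in> EVs_paths E s t l (p ! j)"
proof -
  have "p ! path_len p \<notin> set (take (Suc j) p)"
    using assms(1,2) distinct_nth_notin_set_take[of p "Suc j" "path_len p"]
    unfolding simple_path_def path_len_def by simp
  then have "t \<notin> set (take (Suc j) p)"
    using simple_path_ends(2)[OF assms(1)] by simp
  then show ?thesis
    using simple_path_take[OF assms(1)] assms(2,3)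
    unfolding EVs_paths_def path_len_def by auto
qed

lemma EVs_exists_EVs_subset:
  assumes "q \<in> EVs_paths E s t l u"
  shows "EVs_exists E s t l u" "EVs E s t l u \<subseteq> set q"
  using assms unfolding EVs_exists_def EVs_def by auto

lemma EVt_exists_EVt_subset:
  assumes "q \<in> EVt_paths E s t l v"
  shows "EVt_exists E s t l v" "EVt E s t l v \<subseteq> set q"
  using assms unfolding EVt_exists_def EVt_def by auto

lemma definite_first_edge:
  assumes "simple_path E p s t" "path_len p \<le> k" "1 < length p"
  shows "definite_edge E s t k (p ! 0) (p ! 1)"
proof -
  have "drop 1 p \<in> EVt_paths E s t (k - 1) (p ! 1)"
    using suffix_in_EVt_paths[OF assms(1)] assms(2,3) by simp
  then have "EVt_exists E s t (k - 1) (p ! 1)"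
    by (rule EVt_exists_EVt_subset(1))
  moreover have "(p ! 0, p ! 1) \<in> E"
    using simple_path_edge[OF assms(1), of 0] assms(3) by simp
  ultimately show ?thesis
    using simple_path_ends(1)[OF assms(1)] unfolding definite_edge_def by blast
qed

lemma definite_last_edge:
  assumes "simple_path E p s t" "path_len p \<le> k" "Suc i = path_len p"
  shows "definite_edge E s t k (p ! i) (p ! Suc i)"
proof -
  have "take (Suc i) p \<in> EVs_paths E s t (k - 1) (p ! i)"
    using assms(2,3) by (intro prefix_in_EVs_paths[OF assms(1)]) auto
  then have "EVs_exists E s t (k - 1) (p ! i)"
    by (rule EVs_exists_EVs_subset(1))
  moreover have "Suc i < length p"
    using assms(3) unfolding path_len_def by simp
  then have "(p ! i, p ! Suc i) \<in> E"
    by (rule simple_path_edge[OF assms(1)])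
  ultimately show ?thesis
    using simple_path_ends(2)[OF assms(1)] assms(3) unfolding definite_edge_def by metis
qed

lemma definite_second_edge:
  assumes "simple_path E p s t" "path_len p \<le> k" "2 \<le> path_len p"
  shows "definite_edge E s t k (p ! 1) (p ! 2)"
proof -
  have len: "2 < length p"
    using assms(3) unfolding path_len_def by simp
  have "take 2 p \<in> EVs_paths E s t 1 (p ! 1)"
    using prefix_in_EVs_paths[OF assms(1), of 1 1] assms(3) by (simp add: numeral_2_eq_2)
  then have "EVs_exists E s t 1 (p ! 1)"
    by (rule EVs_exists_EVs_subset(1))
  moreover have suffix: "drop 2 p \<in> EVt_paths E s t (k - 2) (p ! 2)"
    using suffix_in_EVt_paths[OF assms(1)] assms(2) len by simp
  moreover have "p ! 1 \<notin> set (drop 2 p)"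
    using assms(1) distinct_nth_notin_set_drop[of p 1 2] unfolding simple_path_def by simp
  then have "p ! 1 \<notin> EVt E s t (k - 2) (p ! 2)"
    using EVt_exists_EVt_subset(2)[OF suffix] by blast
  moreover have "(p ! 1, p ! 2) \<in> E"
    using simple_path_edge[OF assms(1), of 1] len by (simp add: numeral_2_eq_2)
  ultimately show ?thesis
    using EVt_exists_EVt_subset(1)[OF suffix] unfolding definite_edge_def by blast
qed

lemma definite_penultimate_edge:
  assumes "simple_path E p s t" "path_len p \<le> k" "Suc (Suc i) = path_len p"
  shows "definite_edge E s t k (p ! i) (p ! Suc i)"
proof -
  have len: "Suc i < length p"
    using assms(3) unfolding path_len_def by simp
  have "drop (Suc i) p \<in> EVt_paths E s t 1 (p ! Suc i)"
    using suffix_in_EVt_paths[OF assms(1)] assms(3) len by simp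
  then have "EVt_exists E s t 1 (p ! Suc i)"
    by (rule EVt_exists_EVt_subset(1))
  moreover have prefix: "take (Suc i) p \<in> EVs_paths E s t (k - 2) (p ! i)"
    using prefix_in_EVs_paths[OF assms(1)] assms(2,3) by simp
  moreover have "p ! Suc i \<notin> set (take (Suc i) p)"
    using assms(1) distinct_nth_notin_set_take len unfolding simple_path_def by blast
  then have "p ! Suc i \<notin> EVs E s t (k - 2) (p ! i)"
    using EVs_exists_EVs_subset(2)[OF prefix] by blast
  moreover have "(p ! i, p ! Suc i) \<in> E"
    using simple_path_edge[OF assms(1) len] .
  ultimately show ?thesis
    using EVs_exists_EVs_subset(1)[OF prefix] unfolding definite_edge_def by blast
qed

theorem theorem4p9:
  fixes V :: "'a set" and E :: "('a \<times> 'a) set" and s t :: 'a and k :: nat and p :: "'a list"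
  assumes "E \<subseteq> V \<times> V" and "s \<in> V" and "t \<in> V" and "s \<noteq> t" and "k \<ge> 2"
    and "simple_path E p s t" and "path_len p \<le> k"
  shows "\<forall>i. Suc i < length p \<and> (i < 2 \<or> length p \<le> i + 3) \<longrightarrow>
           definite_edge E s t k (p ! i) (p ! Suc i)"
proof (intro allI impI)
  fix i
  assume i: "Suc i < length p \<and> (i < 2 \<or> length p \<le> i + 3)"
  then consider "i = 0" | "i = 1" | "Suc i = path_len p" | "Suc (Suc i) = path_len p"
    unfolding path_len_def by linarith
  then show "definite_edge E s t k (p ! i) (p ! Suc i)"
  proof cases
    case 1
    then show ?thesis using definite_first_edge assms(6,7) i by simp
  next
    case 2
    with i have "2 \<le> path_len p"
      unfolding path_len_def by simp
    from definite_second_edge[OF assms(6,7) this] 2 show ?thesis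
      by (simp add: numeral_2_eq_2)
  next
    case 3
    then show ?thesis by (rule definite_last_edge[OF assms(6,7)])
  next
    case 4
    then show ?thesis by (rule definite_penultimate_edge[OF assms(6,7)])
  qed
qed

end
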